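(* Let $t$ be a positive integer. Let $\overline{\mathcal{G}}_t$ be the set of nonempty overpartitions whose largest and smallest parts differ by at most $t$, and whose largest part is not overlined whenever this difference is exactly $t$. Let $\overline{\mathcal{P}}_t$ be the set of nonempty overpartitions all of whose parts are at most $t$ and in which no part equal to $t$ is overlined. Define $\phi$ on $\overline{\mathcal{G}}_t$ as follows: for $\pi=(\pi_1,\dots,\pi_\ell)\in\overline{\mathcal{G}}_t$ (parts weakly decreasing), let $s=\lfloor \pi_\ell/t\rfloor$, and let $k$ be the positive integer with $\pi_k\ge (s+1)t>\pi_{k+1}$ if such an integer exists, and $k=0$ otherwise. Set \[ \phi(\pi)=(\underbrace{t,\dots,t}_{s(\ell-k)+(s+1)k},\ \pi_{k+1}-st,\dots,\pi_\ell-st,\ \pi_1-(s+1)t,\dots,\pi_k-(s+1)t), \] where the parts equal to $t$ listed first are not overlined, each part $\pi_i-st$ or $\pi_i-(s+1)t$ is overlined exactly when $\pi_i$ is overlined, and afterwards all parts equal to $0$ are deleted. Then $\phi(\pi)\in\overline{\mathcal{P}}_t$ for every $\pi\in\overline{\mathcal{G}}_t$, and $|\phi(\pi)|=|\pi|$.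
   Context: An overpartition is a partition (weakly decreasing sequence of positive integers) in which the first occurrence of each distinct part size may be overlined; an overlined part $\overline{a}$ has size $a$ for all comparisons and arithmetic. $|\lambda|$ denotes the sum of the parts of $\lambda$. $\lfloor x\rfloor$ is the largest integer not exceeding $x$. *)

theory Defs
  imports Main
begin

text \<open>An overpartition is a list of parts (size, overlined?) with positive sizes,
  weakly decreasing in size, where an overlined part must be the first occurrence
  of its size.\<close>

type_synonym opart = "(nat \<times> bool) list"

definition is_overpartition :: "opart \<Rightarrow> bool" where
  "is_overpartition xs \<longleftrightarrow>
     (\<forall>p \<in> set xs. fst p > 0) \<and>
     sorted_wrt (\<lambda>a b. fst a \<ge> fst b) xs \<and>
     (\<forall>i j. i < j \<and> j < length xs \<and> fst (xs ! i) = fst (xs ! j) \<longrightarrow> \<not> snd (xs ! j))"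

definition opsize :: "opart \<Rightarrow> nat" where
  "opsize xs = sum_list (map fst xs)"

definition G_set :: "nat \<Rightarrow> opart set" where
  "G_set t = {xs. is_overpartition xs \<and> xs \<noteq> [] \<and>
      fst (hd xs) - fst (last xs) \<le> t \<and>
      (fst (hd xs) - fst (last xs) = t \<longrightarrow> \<not> snd (hd xs))}"

definition P_set :: "nat \<Rightarrow> opart set" where
  "P_set t = {xs. is_overpartition xs \<and> xs \<noteq> [] \<and>
      (\<forall>p \<in> set xs. fst p \<le> t) \<and> (\<forall>p \<in> set xs. fst p = t \<longrightarrow> \<not> snd p)}"

text \<open>The index k (1-based): the positive integer with pi_k >= (s+1)t > pi_(k+1), or 0.\<close>
definition phi_k :: "nat \<Rightarrow> opart \<Rightarrow> nat" where
  "phi_k t xs = (let s = fst (last xs) div t;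
      P = (\<lambda>k. 1 \<le> k \<and> k < length xs \<and> fst (xs ! (k - 1)) \<ge> (s + 1) * t \<and> (s + 1) * t > fst (xs ! k))
    in if (\<exists>k. P k) then (THE k. P k) else 0)"

definition phi :: "nat \<Rightarrow> opart \<Rightarrow> opart" where
  "phi t xs = (let l = length xs; s = fst (last xs) div t; k = phi_k t xs;
      body = replicate (s * (l - k) + (s + 1) * k) (t, False)
             @ map (\<lambda>(a, b). (a - s * t, b)) (drop k xs)
             @ map (\<lambda>(a, b). (a - (s + 1) * t, b)) (take k xs)
    in filter (\<lambda>p. fst p \<noteq> 0) body)"

end

theory Submission
  imports Defs
begin

text \<open>With \<open>s = \<lfloor>m/t\<rfloor>\<close> for the smallest part \<open>m\<close>, the parts of \<open>\<pi>\<close> split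
  into a head, the parts \<open>\<ge> (s+1)t\<close>, and a tail. Since all parts lie in \<open>[m, m+t]\<close>, the
  head lies in \<open>[(s+1)t, (s+2)t)\<close> and the tail in \<open>[st, (s+1)t)\<close>, so lowering them by
  \<open>(s+1)t\<close> resp. \<open>st\<close> leaves parts below \<open>t\<close>, and the removed amounts reappear as
  copies of \<open>t\<close>. Any lowered tail part is at least as large as any lowered head part, with
  equality only for a largest part of size \<open>m+t\<close>; such a part is overlined only if it is
  the first part, which the definition of \<open>G_set\<close> excludes. Hence the new list is again a
  weakly decreasing overpartition.\<close>

definition precedes :: "nat \<times> bool \<Rightarrow> nat \<times> bool \<Rightarrow> bool" where
  "precedes a b \<longleftrightarrow> fst b \<le> fst a \<and> (fst a = fst b \<longrightarrow> \<not> snd b)"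

lemma is_overpartition_iff_sorted_precedes:
  "is_overpartition xs \<longleftrightarrow> (\<forall>p \<in> set xs. fst p > 0) \<and> sorted_wrt precedes xs"
  unfolding is_overpartition_def precedes_def sorted_wrt_iff_nth_less by blast

lemma overpartition_fst_bounds:
  assumes "is_overpartition xs" "p \<in> set xs"
  shows "fst (last xs) \<le> fst p \<and> fst p \<le> fst (hd xs)"
proof -
  have sorted: "sorted_wrt (\<lambda>a b. fst b \<le> fst a) xs"
    using assms(1) by (simp add: is_overpartition_def)
  have "fst p \<le> fst (hd xs)"
    using sorted assms(2) by (cases xs) auto
  moreover have "fst (last xs) \<le> fst p"
    using sorted assms(2) by (induction xs) (auto split: if_splits)
  ultimately show ?thesis by simp
qed

lemma overlined_part_of_largest_size_is_hd:
  assumes "is_overpartition xs" "p \<in> set xs" "snd p" "fst p = fst (hd xs)"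
  shows "snd (hd xs)"
proof -
  obtain i where i: "i < length xs" "p = xs ! i" using assms(2) by (auto simp: in_set_conv_nth)
  have "hd xs = xs ! 0" using i by (cases xs) auto
  then show ?thesis
    using assms i unfolding is_overpartition_def by (metis gr0I)
qed

lemma nth_satisfies_iff_less_length_takeWhile:
  assumes "sorted_wrt (\<lambda>a b. Q b \<longrightarrow> Q a) xs" "i < length xs"
  shows "Q (xs ! i) \<longleftrightarrow> i < length (takeWhile Q xs)"
proof
  assume Qi: "Q (xs ! i)"
  show "i < length (takeWhile Q xs)"
  proof (rule ccontr)
    let ?n = "length (takeWhile Q xs)"
    assume "\<not> i < ?n"
    then have "?n \<le> i" "?n < length xs" using assms(2) by simp_all
    then have "Q (xs ! ?n)"
      using Qi assms by (cases "?n = i") (auto simp: sorted_wrt_iff_nth_less le_less)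
    then show False using nth_length_takeWhile \<open>?n < length xs\<close> by blast
  qed
next
  assume "i < length (takeWhile Q xs)"
  then show "Q (xs ! i)" by (metis nth_mem set_takeWhileD takeWhile_nth)
qed

lemma dropWhile_not_satisfies:
  assumes "sorted_wrt (\<lambda>a b. Q b \<longrightarrow> Q a) xs" "p \<in> set (dropWhile Q xs)"
  shows "\<not> Q p"
  using assms by (induction xs) (auto split: if_splits)

lemma phi_k_eq_length_takeWhile:
  assumes "t > 0" "is_overpartition xs" "xs \<noteq> []"
  shows "phi_k t xs = length (takeWhile (\<lambda>p. (fst (last xs) div t + 1) * t \<le> fst p) xs)"
proof -
  define c where "c = (fst (last xs) div t + 1) * t"
  define Q where "Q = (\<lambda>p :: nat \<times> bool. c \<le> fst p)"
  define n where "n = length (takeWhile Q xs)"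
  have "sorted_wrt (\<lambda>a b. Q b \<longrightarrow> Q a) xs"
    using assms(2) unfolding is_overpartition_def Q_def
    by (auto elim: sorted_wrt_mono_rel[rotated])
  then have Q_iff: "\<And>i. i < length xs \<Longrightarrow> Q (xs ! i) \<longleftrightarrow> i < n"
    unfolding n_def by (rule nth_satisfies_iff_less_length_takeWhile)
  have "fst (last xs) < c"
    using dividend_less_div_times[OF assms(1)] unfolding c_def by simp
  then have "\<not> Q (xs ! (length xs - 1))"
    using assms(3) by (simp add: Q_def last_conv_nth)
  then have "n < length xs"
    using Q_iff[of "length xs - 1"] assms(3) by (cases xs) auto
  then have "(1 \<le> k \<and> k < length xs \<and> fst (xs ! (k - 1)) \<ge> c \<and> c > fst (xs ! k)) \<longleftrightarrow> k = n \<and> 0 < n"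
    for k
    using Q_iff[of k] Q_iff[of "k - 1"] \<open>n < length xs\<close> unfolding Q_def by (cases k) auto
  then show ?thesis
    unfolding phi_k_def Let_def c_def[symmetric] n_def[symmetric] Q_def[symmetric]
    by (cases "n = 0") auto
qed

definition shift_parts :: "nat \<Rightarrow> opart \<Rightarrow> opart" where
  "shift_parts c = map (\<lambda>(a, b). (a - c, b))"

lemma opsize_shift_parts:
  "\<forall>p \<in> set ys. c \<le> fst p \<Longrightarrow> opsize (shift_parts c ys) + c * length ys = opsize ys"
  unfolding opsize_def shift_parts_def by (induction ys) (auto simp: split_def)

lemma sorted_precedes_shift_parts:
  assumes "sorted_wrt precedes ys" "\<forall>p \<in> set ys. c \<le> fst p"
  shows "sorted_wrt precedes (shift_parts c ys)"
  unfolding shift_parts_def sorted_wrt_map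
  by (rule sorted_wrt_mono_rel[OF _ assms(1)]) (use assms(2) in \<open>auto simp: precedes_def split_def\<close>)

lemma opsize_filter_nonzero: "opsize (filter (\<lambda>p. fst p \<noteq> 0) ys) = opsize ys"
  unfolding opsize_def by (induction ys) auto

lemma phi_eq_split:
  assumes "t > 0" "is_overpartition xs" "xs \<noteq> []"
    and "s = fst (last xs) div t"
    and "H = takeWhile (\<lambda>p. (s + 1) * t \<le> fst p) xs"
    and "T = dropWhile (\<lambda>p. (s + 1) * t \<le> fst p) xs"
  shows "phi t xs = filter (\<lambda>p. fst p \<noteq> 0)
    (replicate (s * length T + (s + 1) * length H) (t, False)
      @ shift_parts (s * t) T @ shift_parts ((s + 1) * t) H)"
proof -
  have "length T = length xs - length H"
    unfolding assms(5,6) by (metis add_diff_cancel_left' length_append takeWhile_dropWhile_id)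
  then show ?thesis
    using phi_k_eq_length_takeWhile[OF assms(1-3)] assms(4-6)
    unfolding phi_def Let_def shift_parts_def
    by (simp flip: takeWhile_eq_take dropWhile_eq_drop)
qed

lemma shifted_parts_precede:
  assumes "xs \<in> G_set t" "x \<in> set xs" "y \<in> set xs"
    and "s * t \<le> fst x" "(s + 1) * t \<le> fst y"
  shows "precedes (fst x - s * t, snd x) (fst y - (s + 1) * t, snd y)"
proof -
  have ovp: "is_overpartition xs"
    and spread: "fst (hd xs) - fst (last xs) \<le> t"
    and hd_plain: "fst (hd xs) - fst (last xs) = t \<Longrightarrow> \<not> snd (hd xs)"
    using assms(1) by (auto simp: G_set_def)
  have "fst y \<le> fst (hd xs)" "fst (last xs) \<le> fst x"
    using overpartition_fst_bounds[OF ovp] assms(2,3) by auto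
  then have y_le: "fst y \<le> fst x + t"
    using spread by linarith
  have "\<not> snd y" if "fst x - s * t = fst y - (s + 1) * t"
  proof
    assume "snd y"
    have "fst y = fst x + t" using that assms(4,5) by (simp add: algebra_simps)
    then have "fst y = fst (hd xs)" "fst (hd xs) - fst (last xs) = t"
      using \<open>fst y \<le> fst (hd xs)\<close> \<open>fst (last xs) \<le> fst x\<close> spread by linarith+
    then show False
      using overlined_part_of_largest_size_is_hd[OF ovp assms(3) \<open>snd y\<close>] hd_plain by blast
  qed
  moreover have "fst y - (s + 1) * t \<le> fst x - s * t"
    using y_le assms(4,5) by (simp add: algebra_simps)
  ultimately show ?thesis by (auto simp: precedes_def)
qed

lemma phi_tail_part_bounds:
  assumes "is_overpartition xs" "s = fst (last xs) div t"
    and "p \<in> set (dropWhile (\<lambda>p. (s + 1) * t \<le> fst p) xs)"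
  shows "s * t \<le> fst p \<and> fst p < (s + 1) * t"
proof -
  have "sorted_wrt (\<lambda>a b. (s + 1) * t \<le> fst b \<longrightarrow> (s + 1) * t \<le> fst a) xs"
    using assms(1) unfolding is_overpartition_def by (auto elim: sorted_wrt_mono_rel[rotated])
  then have "\<not> (s + 1) * t \<le> fst p"
    using dropWhile_not_satisfies[where Q = "\<lambda>p. (s + 1) * t \<le> fst p"] assms(3) by blast
  moreover have "fst (last xs) \<le> fst p"
    using overpartition_fst_bounds[OF assms(1) set_dropWhileD[OF assms(3)]] by simp
  moreover have "s * t \<le> fst (last xs)"
    unfolding assms(2) by simp
  ultimately show ?thesis by simp
qed

lemma phi_head_part_bounds:
  assumes "t > 0" "xs \<in> G_set t" "s = fst (last xs) div t"
    and "p \<in> set (takeWhile (\<lambda>p. (s + 1) * t \<le> fst p) xs)"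
  shows "(s + 1) * t \<le> fst p \<and> fst p < (s + 2) * t"
proof -
  have "p \<in> set xs" "(s + 1) * t \<le> fst p"
    using set_takeWhileD[OF assms(4)] by simp_all
  moreover have "fst p \<le> fst (last xs) + t"
    using overpartition_fst_bounds[of xs p] \<open>p \<in> set xs\<close> assms(2) by (auto simp: G_set_def)
  moreover have "fst (last xs) < (s + 1) * t"
    using dividend_less_div_times[OF assms(1)] unfolding assms(3) by simp
  ultimately show ?thesis by simp
qed

lemma opsize_pos: "is_overpartition xs \<Longrightarrow> xs \<noteq> [] \<Longrightarrow> 0 < opsize xs"
  by (auto simp: is_overpartition_def opsize_def neq_Nil_conv)

lemma opsize_phi:
  assumes "t > 0" "is_overpartition xs" "xs \<noteq> []"
  shows "opsize (phi t xs) = opsize xs"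
proof -
  define s where "s = fst (last xs) div t"
  define H where "H = takeWhile (\<lambda>p. (s + 1) * t \<le> fst p) xs"
  define T where "T = dropWhile (\<lambda>p. (s + 1) * t \<le> fst p) xs"
  have H_ge: "\<forall>p \<in> set H. (s + 1) * t \<le> fst p"
    unfolding H_def by (auto dest: set_takeWhileD)
  have T_ge: "\<forall>p \<in> set T. s * t \<le> fst p"
    using phi_tail_part_bounds[OF assms(2) s_def] unfolding T_def by blast
  have "opsize (phi t xs)
      = (s * length T + (s + 1) * length H) * t + opsize (shift_parts (s * t) T)
          + opsize (shift_parts ((s + 1) * t) H)"
    unfolding phi_eq_split[OF assms s_def H_def T_def] opsize_filter_nonzero
    by (simp add: opsize_def sum_list_replicate)
  also have "\<dots> = opsize T + opsize H"
    using opsize_shift_parts[OF H_ge] opsize_shift_parts[OF T_ge] by (simp add: algebra_simps)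
  also have "\<dots> = opsize xs"
    unfolding H_def T_def opsize_def by (metis add.commute map_append sum_list_append takeWhile_dropWhile_id)
  finally show ?thesis .
qed

lemma shifted_phi_parts_less:
  assumes "t > 0" "xs \<in> G_set t" "s = fst (last xs) div t"
    and "H = takeWhile (\<lambda>p. (s + 1) * t \<le> fst p) xs"
    and "T = dropWhile (\<lambda>p. (s + 1) * t \<le> fst p) xs"
    and "p \<in> set (shift_parts (s * t) T @ shift_parts ((s + 1) * t) H)"
  shows "fst p < t"
proof -
  have ovp: "is_overpartition xs"
    using assms(2) by (simp add: G_set_def)
  note H_bounds = phi_head_part_bounds[OF assms(1-3), folded assms(4)]
  note T_bounds = phi_tail_part_bounds[OF ovp assms(3), folded assms(5)]
  show ?thesis
    using assms(6) by (auto simp: shift_parts_def split_def dest!: H_bounds T_bounds)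
qed

lemma sorted_precedes_phi_split:
  assumes "t > 0" "xs \<in> G_set t" "s = fst (last xs) div t"
    and "H = takeWhile (\<lambda>p. (s + 1) * t \<le> fst p) xs"
    and "T = dropWhile (\<lambda>p. (s + 1) * t \<le> fst p) xs"
  shows "sorted_wrt precedes (replicate n (t, False) @ shift_parts (s * t) T @ shift_parts ((s + 1) * t) H)"
proof -
  have ovp: "is_overpartition xs"
    using assms(2) by (simp add: G_set_def)
  then have sorted: "sorted_wrt precedes xs"
    using is_overpartition_iff_sorted_precedes by blast
  note H_bounds = phi_head_part_bounds[OF assms(1-3), folded assms(4)]
  note T_bounds = phi_tail_part_bounds[OF ovp assms(3), folded assms(5)]
  have sorted_T: "sorted_wrt precedes (shift_parts (s * t) T)"
    using sorted_precedes_shift_parts[of T] sorted T_bounds unfolding assms(5) by simp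
  have sorted_H: "sorted_wrt precedes (shift_parts ((s + 1) * t) H)"
    using sorted_precedes_shift_parts[of H] sorted H_bounds unfolding assms(4) by simp
  have seam: "precedes x y"
    if x_in: "x \<in> set (shift_parts (s * t) T)" and y_in: "y \<in> set (shift_parts ((s + 1) * t) H)" for x y
  proof -
    obtain a where "a \<in> set T" "x = (fst a - s * t, snd a)"
      using x_in unfolding shift_parts_def by (auto simp: split_def)
    moreover obtain b where "b \<in> set H" "y = (fst b - (s + 1) * t, snd b)"
      using y_in unfolding shift_parts_def by (auto simp: split_def)
    ultimately show ?thesis
      using shifted_parts_precede[OF assms(2), of a b s] T_bounds H_bounds
      unfolding assms(4,5) by (auto dest: set_takeWhileD set_dropWhileD)
  qed
  have "precedes (t, False) y" if "y \<in> set (shift_parts (s * t) T @ shift_parts ((s + 1) * t) H)" for y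
    using shifted_phi_parts_less[OF assms that] by (simp add: precedes_def)
  moreover have "sorted_wrt precedes (replicate n (t, False))"
    by (simp add: precedes_def sorted_wrt_iff_nth_less)
  ultimately show ?thesis
    unfolding sorted_wrt_append using sorted_T sorted_H seam by auto
qed

lemma phi_in_P_set:
  assumes "t > 0" "xs \<in> G_set t"
  shows "phi t xs \<in> P_set t"
proof -
  have ovp: "is_overpartition xs" and ne: "xs \<noteq> []"
    using assms(2) by (auto simp: G_set_def)
  define s where "s = fst (last xs) div t"
  define H where "H = takeWhile (\<lambda>p. (s + 1) * t \<le> fst p) xs"
  define T where "T = dropWhile (\<lambda>p. (s + 1) * t \<le> fst p) xs"
  define ys where "ys = replicate (s * length T + (s + 1) * length H) (t, False)
    @ shift_parts (s * t) T @ shift_parts ((s + 1) * t) H"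
  have phi_eq: "phi t xs = filter (\<lambda>p. fst p \<noteq> 0) ys"
    using phi_eq_split[OF assms(1) ovp ne s_def H_def T_def] unfolding ys_def .
  have "sorted_wrt precedes (phi t xs)"
    unfolding phi_eq ys_def by (intro sorted_wrt_filter sorted_precedes_phi_split[OF assms s_def H_def T_def])
  then have "is_overpartition (phi t xs)"
    unfolding is_overpartition_iff_sorted_precedes phi_eq by auto
  moreover have "\<forall>p \<in> set (phi t xs). fst p \<le> t \<and> (fst p = t \<longrightarrow> \<not> snd p)"
    using shifted_phi_parts_less[OF assms s_def H_def T_def] unfolding phi_eq ys_def by fastforce
  moreover have "phi t xs \<noteq> []"
  proof
    assume "phi t xs = []"
    then have "opsize (phi t xs) = 0" by (simp add: opsize_def)
    then show False
      using opsize_phi[OF assms(1) ovp ne] opsize_pos[OF ovp ne] by simp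
  qed
  ultimately show ?thesis by (simp add: P_set_def)
qed

theorem mainTheorem2:
  fixes t :: nat and xs :: opart
  assumes "t > 0" and "xs \<in> G_set t"
  shows "phi t xs \<in> P_set t \<and> opsize (phi t xs) = opsize xs"
  using phi_in_P_set[OF assms] opsize_phi[OF assms(1)] assms(2) by (simp add: G_set_def)

end
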